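(* Let $L$ be a finite list with $t$ marked items, where $|L|/4 < t \le |L|$, and let $\theta \in (0,\pi/2]$ satisfy $\sin^2\theta = t/|L|$. For a positive integer $m$, let $P_m$ be the probability of finding a marked item when one chooses $j$ uniformly at random among the non-negative integers smaller than $m$, applies $j$ Grover iterations to the uniform superposition over $L$ and measures. Then $$P_m \ge \begin{cases} \frac14 & \text{for } m = 1,\\ \frac12 - \frac{1}{2\pi}\frac{1}{1-\frac{\pi^2}{96}} \approx 0.323 & \text{for } m > 1.\end{cases}$$
   Context: A Grover iteration is the unitary that reflects through the unmarked states followed by a reflection through the uniform superposition over $L$. For $\theta \ne \pi/2$ one has $P_m = \frac12 - \frac{\sin(4m\theta)}{4m\sin(2\theta)}$. *)

theory Defs
  imports Complex_Main
begin

text \<open>Quantum states on a finite list (index set) L are amplitude functions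
  L \<Rightarrow> real (all amplitudes occurring in Grover search are real).
  M is the set of marked items.\<close>

definition uniform_state :: "'a set \<Rightarrow> ('a \<Rightarrow> real)" where
  "uniform_state L = (\<lambda>x. if x \<in> L then 1 / sqrt (real (card L)) else 0)"

definition reflect_unmarked :: "'a set \<Rightarrow> ('a \<Rightarrow> real) \<Rightarrow> ('a \<Rightarrow> real)" where
  "reflect_unmarked M \<psi> = (\<lambda>x. if x \<in> M then - \<psi> x else \<psi> x)"

definition reflect_uniform :: "'a set \<Rightarrow> ('a \<Rightarrow> real) \<Rightarrow> ('a \<Rightarrow> real)" where
  "reflect_uniform L \<psi> =
     (let u = uniform_state L; c = (\<Sum>y\<in>L. u y * \<psi> y) in (\<lambda>x. 2 * c * u x - \<psi> x))"

definition grover_iter :: "'a set \<Rightarrow> 'a set \<Rightarrow> ('a \<Rightarrow> real) \<Rightarrow> ('a \<Rightarrow> real)" where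
  "grover_iter L M \<psi> = reflect_uniform L (reflect_unmarked M \<psi>)"

definition grover_success :: "'a set \<Rightarrow> 'a set \<Rightarrow> nat \<Rightarrow> real" where
  "grover_success L M j = (\<Sum>x\<in>M. (((grover_iter L M ^^ j) (uniform_state L)) x)\<^sup>2)"

definition P_avg :: "'a set \<Rightarrow> 'a set \<Rightarrow> nat \<Rightarrow> real" where
  "P_avg L M m = (\<Sum>j<m. grover_success L M j) / real m"

end

theory Submission
  imports Defs "HOL-Analysis.Complex_Transcendental"
begin

text \<open>The Grover iteration preserves states that are constant on the marked and on the unmarked
  items. On the plane of such states, with orthonormal basis the normalised marked and unmarked
  superpositions, it is the rotation by \<open>2\<theta>\<close>, and the uniform state has angle \<open>\<theta>\<close>; so after
  \<open>j\<close> iterations the success probability is \<open>sin\<^sup>2((2j+1)\<theta>)\<close>. Averaging over \<open>j < m\<close>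
  telescopes to \<open>P\<^sub>m = 1/2 - sin(4m\<theta>) / (4m sin 2\<theta>)\<close>. Since \<open>t > |L|/4\<close> forces
  \<open>\<theta> > \<pi>/6\<close>, the angle \<open>\<phi> = \<pi> - 2\<theta>\<close> lies in \<open>(0, 2\<pi>/3)\<close> and the error term becomes
  \<open>-sin(2m\<phi>) / (4m sin \<phi>)\<close>. It is harmless while \<open>2m\<phi> \<le> \<pi>\<close>; beyond that it is bounded
  using \<open>sin \<phi> \<ge> (1 - \<pi>\<^sup>2/96) \<phi>\<close> for \<open>\<phi> \<le> \<pi>/4\<close> and \<open>sin \<phi> \<ge> \<surd>2/2\<close> otherwise.\<close>

definition two_level_state :: "'a set \<Rightarrow> 'a set \<Rightarrow> real \<Rightarrow> real \<Rightarrow> 'a \<Rightarrow> real" where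
  "two_level_state L M a b = (\<lambda>x. if x \<in> M then a else if x \<in> L then b else 0)"

lemma two_level_state_cong:
  assumes "a = a'" and "L - M \<noteq> {} \<Longrightarrow> b = b'"
  shows "two_level_state L M a b = two_level_state L M a' b'"
  using assms by (auto simp: two_level_state_def fun_eq_iff)

lemma grover_iter_two_level_state:
  fixes a b :: real
  assumes "finite L" and "M \<subseteq> L"
  defines "c \<equiv> 2 * (real (card (L - M)) * b - real (card M) * a) / real (card L)"
  shows "grover_iter L M (two_level_state L M a b) = two_level_state L M (a + c) (c - b)"
proof -
  let ?u = "uniform_state L" and ?\<psi> = "reflect_unmarked M (two_level_state L M a b)"
  have "(\<Sum>y\<in>L. ?u y * ?\<psi> y) = (\<Sum>y\<in>L - M. ?u y * ?\<psi> y) + (\<Sum>y\<in>M. ?u y * ?\<psi> y)"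
    using sum.subset_diff[OF assms(2,1)] by simp
  also have "\<dots> = (\<Sum>y\<in>L - M. b / sqrt (card L)) + (\<Sum>y\<in>M. - a / sqrt (card L))"
    using assms(2) by (intro arg_cong2[where f = "(+)"] sum.cong)
      (auto simp: uniform_state_def reflect_unmarked_def two_level_state_def)
  finally have inner:
    "(\<Sum>y\<in>L. ?u y * ?\<psi> y) = (real (card (L - M)) * b - real (card M) * a) / sqrt (card L)"
    by (simp add: diff_divide_distrib)
  have "2 * (\<Sum>y\<in>L. ?u y * ?\<psi> y) * (1 / sqrt (card L)) = c"
    unfolding inner c_def by (simp add: field_simps)
  then show ?thesis
    using assms(2) by (auto simp: grover_iter_def reflect_uniform_def uniform_state_def
        reflect_unmarked_def two_level_state_def fun_eq_iff Let_def)
qed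

lemma sin_add_twice: "sin (a + 2 * x) = sin a + 2 * cos (a + x) * sin (x :: real)"
  using cos_times_sin[of "a + x" x] by (simp add: algebra_simps)

lemma cos_add_twice: "cos (a + 2 * x) = 2 * cos (a + x) * cos x - cos (a :: real)"
  using cos_times_cos[of "a + x" x] by (simp add: algebra_simps)

lemma sin_times_sum_cos_odd:
  "2 * sin x * (\<Sum>j<m. cos ((2 * real j + 1) * x)) = sin (2 * real m * (x :: real))"
proof (induction m)
  case (Suc m)
  have "2 * sin x * cos ((2 * real m + 1) * x) = sin (2 * real (Suc m) * x) - sin (2 * real m * x)"
    using cos_times_sin[of "(2 * real m + 1) * x" x] by (simp add: algebra_simps)
  with Suc.IH show ?case by (simp add: algebra_simps)
qed simp

lemma one_minus_sq_div_2_le_cos: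
  fixes x :: real
  assumes "0 \<le> x"
  shows "1 - x\<^sup>2 / 2 \<le> cos x"
proof -
  have "\<And>y. 0 \<le> y \<Longrightarrow> y \<le> x \<Longrightarrow>
      ((\<lambda>y. cos y - 1 + y\<^sup>2 / 2) has_real_derivative y - sin y) (at y)"
    by (auto intro!: derivative_eq_intros)
  moreover have "\<And>y::real. 0 \<le> y \<Longrightarrow> 0 \<le> y - sin y"
    using sin_x_le_x by simp
  ultimately have "cos 0 - 1 + 0\<^sup>2 / 2 \<le> cos x - 1 + x\<^sup>2 / 2"
    by (intro DERIV_nonneg_imp_nondecreasing[OF assms]) blast
  then show ?thesis
    by simp
qed

lemma x_minus_cube_div_6_le_sin:
  fixes x :: real
  assumes "0 \<le> x"
  shows "x - x ^ 3 / 6 \<le> sin x"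
proof -
  have "\<And>y. 0 \<le> y \<Longrightarrow> y \<le> x \<Longrightarrow>
      ((\<lambda>y. sin y - y + y ^ 3 / 6) has_real_derivative cos y - 1 + y\<^sup>2 / 2) (at y)"
    by (auto intro!: derivative_eq_intros simp: field_simps)
  moreover have "\<And>y::real. 0 \<le> y \<Longrightarrow> 0 \<le> cos y - 1 + y\<^sup>2 / 2"
    using one_minus_sq_div_2_le_cos by fastforce
  ultimately have "sin 0 - 0 + 0 ^ 3 / 6 \<le> sin x - x + x ^ 3 / 6"
    by (intro DERIV_nonneg_imp_nondecreasing[OF assms]) blast
  then show ?thesis
    by simp
qed

lemma sin_ge_linear_quarter_pi:
  fixes x :: real
  assumes "0 \<le> x" and "x \<le> pi / 4"
  shows "(1 - pi\<^sup>2 / 96) * x \<le> sin x"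
proof -
  have "x\<^sup>2 \<le> (pi / 4)\<^sup>2"
    using assms by (intro power_mono) auto
  then have "x * x\<^sup>2 \<le> x * (pi / 4)\<^sup>2"
    using assms(1) by (rule mult_left_mono)
  then have "(1 - pi\<^sup>2 / 96) * x \<le> x - x ^ 3 / 6"
    by (simp add: power2_eq_square power3_eq_cube field_simps)
  also have "\<dots> \<le> sin x"
    using assms(1) by (rule x_minus_cube_div_6_le_sin)
  finally show ?thesis .
qed

definition grover_avg_bound :: real where
  "grover_avg_bound = 1 / (2 * pi) * (1 / (1 - pi\<^sup>2 / 96))"

lemma one_minus_pi_sq_div_96_pos: "0 < 1 - pi\<^sup>2 / 96"
proof -
  have "pi\<^sup>2 \<le> 4\<^sup>2"
    using pi_less_4 pi_gt_zero by (intro power_mono) auto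
  then show ?thesis
    by simp
qed

lemma grover_avg_bound_pos: "0 < grover_avg_bound"
  using one_minus_pi_sq_div_96_pos by (simp add: grover_avg_bound_def)

lemma one_le_4_sqrt2_grover_avg_bound: "1 \<le> 4 * sqrt 2 * grover_avg_bound"
proof -
  have pi_bounds: "3.1415 \<le> pi" "pi \<le> 3.1416"
    using pi_approx by simp_all
  have "31.0035 \<le> (3.1415 :: real) ^ 3"
    by (simp add: power3_eq_cube)
  also have "\<dots> \<le> pi ^ 3"
    using pi_bounds by (intro power_mono) auto
  finally have "2 * pi - pi ^ 3 / 48 \<le> 4 * sqrt 2"
    using pi_bounds real_le_rsqrt[of "1.4142" 2] by (simp add: power2_eq_square)
  then have "(2 * pi - pi ^ 3 / 48) * grover_avg_bound \<le> 4 * sqrt 2 * grover_avg_bound"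
    using grover_avg_bound_pos by (intro mult_right_mono) simp_all
  moreover have "(2 * pi - pi ^ 3 / 48) * grover_avg_bound = 1"
    using one_minus_pi_sq_div_96_pos pi_gt_zero
    by (simp add: grover_avg_bound_def field_simps power2_eq_square power3_eq_cube)
  ultimately show ?thesis
    by simp
qed

lemma minus_sin_mult_le_grover_avg_bound:
  fixes \<phi> :: real
  assumes "0 < \<phi>" and "\<phi> < 2 * pi / 3" and "2 \<le> m"
  shows "- sin (2 * real m * \<phi>) \<le> 4 * real m * grover_avg_bound * sin \<phi>"
proof -
  have sin_pos: "0 < sin \<phi>"
    using assms(1,2) by (intro sin_gt_zero) auto
  consider "2 * real m * \<phi> \<le> pi" | "pi < 2 * real m * \<phi>" "\<phi> \<le> pi / 4" | "pi / 4 < \<phi>"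
    by linarith
  then show ?thesis
  proof cases
    case 1
    then have "0 \<le> sin (2 * real m * \<phi>)"
      using assms(1) by (intro sin_ge_zero) auto
    moreover have "0 \<le> 4 * real m * grover_avg_bound * sin \<phi>"
      using grover_avg_bound_pos sin_pos by simp
    ultimately show ?thesis
      by linarith
  next
    case 2
    have "1 < 2 * real m * \<phi> / pi"
      using 2(1) by simp
    also have "\<dots> = 4 * real m * grover_avg_bound * ((1 - pi\<^sup>2 / 96) * \<phi>)"
      using one_minus_pi_sq_div_96_pos by (simp add: grover_avg_bound_def field_simps)
    also have "\<dots> \<le> 4 * real m * grover_avg_bound * sin \<phi>"
      using sin_ge_linear_quarter_pi[of \<phi>] assms(1) 2(2) grover_avg_bound_pos by (intro mult_left_mono) auto
    finally show ?thesis
      using sin_ge_minus_one[of "2 * real m * \<phi>"] by linarith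
  next
    case 3
    have "sqrt 2 / 2 \<le> sin \<phi>"
    proof (cases "\<phi> \<le> pi / 2")
      case True
      then show ?thesis
        using sin_monotone_2pi_le[of "pi / 4" \<phi>] 3 by (simp add: sin_45)
    next
      case False
      then show ?thesis
        using sin_monotone_2pi_le[of "pi / 4" "pi - \<phi>"] assms(2) by (simp add: sin_45)
    qed
    then have "8 * grover_avg_bound * (sqrt 2 / 2) \<le> 4 * real m * grover_avg_bound * sin \<phi>"
      using assms(3) grover_avg_bound_pos by (intro mult_mono) auto
    then have "4 * sqrt 2 * grover_avg_bound \<le> 4 * real m * grover_avg_bound * sin \<phi>"
      by (simp add: algebra_simps)
    then show ?thesis
      using one_le_4_sqrt2_grover_avg_bound sin_ge_minus_one[of "2 * real m * \<phi>"] by linarith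
  qed
qed

lemma sin_ratio_le_grover_avg_bound:
  fixes \<theta> :: real
  assumes "pi / 6 < \<theta>" and "\<theta> < pi / 2" and "2 \<le> m"
  shows "sin (4 * real m * \<theta>) / (4 * real m * sin (2 * \<theta>)) \<le> grover_avg_bound"
proof -
  define \<phi> where "\<phi> = pi - 2 * \<theta>"
  have "sin (2 * \<theta>) = sin \<phi>"
    by (simp add: \<phi>_def sin_diff)
  moreover have "sin (4 * real m * \<theta>) = - sin (2 * real m * \<phi>)"
  proof -
    have "4 * real m * \<theta> = real (2 * m) * pi - 2 * real m * \<phi>"
      by (simp add: \<phi>_def algebra_simps)
    then show ?thesis
      by (simp add: sin_diff)
  qed
  moreover have "0 < sin \<phi>"
    using assms(1,2) by (intro sin_gt_zero) (auto simp: \<phi>_def)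
  moreover have "- sin (2 * real m * \<phi>) \<le> 4 * real m * grover_avg_bound * sin \<phi>"
    using assms by (intro minus_sin_mult_le_grover_avg_bound) (auto simp: \<phi>_def)
  ultimately show ?thesis
    using assms(3) by (simp add: field_simps)
qed

lemma pi_div_6_less_if_sin_sq_gt_quarter:
  fixes \<theta> :: real
  assumes "0 \<le> \<theta>" and "1 / 4 < (sin \<theta>)\<^sup>2"
  shows "pi / 6 < \<theta>"
proof (rule ccontr)
  assume "\<not> pi / 6 < \<theta>"
  then have "sin \<theta> \<le> 1 / 2" and "0 \<le> sin \<theta>"
    using assms(1) sin_monotone_2pi_le[of \<theta> "pi / 6"] sin_ge_zero[of \<theta>] by (auto simp: sin_30)
  then have "(sin \<theta>)\<^sup>2 \<le> (1 / 2)\<^sup>2"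
    by (intro power_mono)
  with assms(2) show False
    by (simp add: power2_eq_square)
qed

locale grover_angle =
  fixes L M :: "'a set" and \<theta> :: real
  assumes finite_L: "finite L" and marked_subset: "M \<subseteq> L" and marked_nonempty: "M \<noteq> {}"
    and angle_pos: "0 < \<theta>" and angle_le: "\<theta> \<le> pi / 2"
    and sin_angle_sq: "(sin \<theta>)\<^sup>2 = real (card M) / real (card L)"
begin

lemma card_marked_pos: "0 < card M"
  using finite_L marked_subset marked_nonempty by (meson card_gt_0_iff finite_subset)

lemma card_L_pos: "0 < card L"
  using card_marked_pos card_mono[OF finite_L marked_subset] by linarith

lemma sin_angle_pos: "0 < sin \<theta>"
  using angle_pos angle_le by (intro sin_gt_zero) auto

lemma sqrt_card_marked: "sqrt (card M) = sqrt (card L) * sin \<theta>"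
proof -
  have "real (card M) = card L * (sin \<theta>)\<^sup>2"
    using sin_angle_sq card_L_pos by simp
  then show ?thesis
    using sin_angle_pos by (simp add: real_sqrt_mult)
qed

lemma sqrt_card_unmarked: "sqrt (card (L - M)) = sqrt (card L) * cos \<theta>"
proof -
  have "0 \<le> cos \<theta>"
    using angle_pos angle_le by (intro cos_ge_zero) auto
  moreover have "real (card (L - M)) = card L * (cos \<theta>)\<^sup>2"
    using sin_angle_sq card_L_pos card_mono[OF finite_L marked_subset]
    by (simp add: card_Diff_subset[OF finite_subset[OF marked_subset finite_L] marked_subset]
        cos_squared_eq algebra_simps)
  ultimately show ?thesis
    by (simp add: real_sqrt_mult)
qed

lemma cos_angle_pos:
  assumes "L - M \<noteq> {}"
  shows "0 < cos \<theta>"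
proof -
  have "0 < sqrt (card (L - M))"
    using assms finite_L by (simp add: card_gt_0_iff)
  then show ?thesis
    using card_L_pos by (simp add: sqrt_card_unmarked zero_less_mult_iff)
qed

text \<open>If every item is marked, the unmarked amplitude divides by \<open>sqrt 0 = 0\<close>; it is then
  irrelevant, which is why \<open>two_level_state_cong\<close> only compares it when \<open>L - M \<noteq> {}\<close>.\<close>

definition angle_state :: "real \<Rightarrow> 'a \<Rightarrow> real" where
  "angle_state a = two_level_state L M (sin a / sqrt (card M)) (cos a / sqrt (card (L - M)))"

lemma grover_iter_angle_state: "grover_iter L M (angle_state a) = angle_state (a + 2 * \<theta>)"
proof -
  let ?N = "real (card L)" and ?t = "real (card M)" and ?k = "real (card (L - M))"
  have "?k * (cos a / sqrt ?k) - ?t * (sin a / sqrt ?t) = sqrt ?k * cos a - sqrt ?t * sin a"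
    using real_div_sqrt[of ?k] real_div_sqrt[of ?t]
    by (simp add: times_divide_eq_right[symmetric] mult.commute)
  also have "\<dots> = sqrt ?N * cos (a + \<theta>)"
    by (simp add: sqrt_card_marked sqrt_card_unmarked cos_add algebra_simps)
  finally have c:
    "2 * (?k * (cos a / sqrt ?k) - ?t * (sin a / sqrt ?t)) / ?N = 2 * cos (a + \<theta>) / sqrt ?N"
    using card_L_pos by (simp add: field_simps)
  show ?thesis
    unfolding angle_state_def grover_iter_two_level_state[OF finite_L marked_subset] c
  proof (rule two_level_state_cong)
    show "sin a / sqrt ?t + 2 * cos (a + \<theta>) / sqrt ?N = sin (a + 2 * \<theta>) / sqrt ?t"
      unfolding sin_add_twice sqrt_card_marked
      using sin_angle_pos card_L_pos by (simp add: field_simps)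
    assume "L - M \<noteq> {}"
    then have "0 < cos \<theta>"
      by (rule cos_angle_pos)
    then show "2 * cos (a + \<theta>) / sqrt ?N - cos a / sqrt ?k = cos (a + 2 * \<theta>) / sqrt ?k"
      unfolding cos_add_twice sqrt_card_unmarked using card_L_pos by (simp add: field_simps)
  qed
qed

lemma uniform_state_eq_angle_state: "uniform_state L = angle_state \<theta>"
proof -
  have "uniform_state L = two_level_state L M (1 / sqrt (card L)) (1 / sqrt (card L))"
    using marked_subset by (auto simp: uniform_state_def two_level_state_def fun_eq_iff)
  also have "\<dots> = angle_state \<theta>"
    unfolding angle_state_def sqrt_card_marked sqrt_card_unmarked
  proof (rule two_level_state_cong)
    show "1 / sqrt (card L) = sin \<theta> / (sqrt (card L) * sin \<theta>)"
      using sin_angle_pos card_L_pos by simp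
    assume "L - M \<noteq> {}"
    then show "1 / sqrt (card L) = cos \<theta> / (sqrt (card L) * cos \<theta>)"
      using cos_angle_pos card_L_pos by simp
  qed
  finally show ?thesis .
qed

lemma grover_iter_power_uniform:
  "(grover_iter L M ^^ j) (uniform_state L) = angle_state ((2 * real j + 1) * \<theta>)"
proof (induction j)
  case (Suc j)
  have "(2 * real j + 1) * \<theta> + 2 * \<theta> = (2 * real (Suc j) + 1) * \<theta>"
    by (simp add: algebra_simps)
  with Suc.IH show ?case
    by (simp add: grover_iter_angle_state)
qed (simp add: uniform_state_eq_angle_state)

lemma grover_success_eq: "grover_success L M j = (sin ((2 * real j + 1) * \<theta>))\<^sup>2"
proof -
  have "grover_success L M j = (\<Sum>x\<in>M. (sin ((2 * real j + 1) * \<theta>) / sqrt (card M))\<^sup>2)"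
    unfolding grover_success_def grover_iter_power_uniform
    by (intro sum.cong) (auto simp: angle_state_def two_level_state_def)
  then show ?thesis
    using card_marked_pos by (simp add: power_divide)
qed

lemma P_avg_eq_sum_cos:
  assumes "0 < m"
  shows "P_avg L M m = 1 / 2 - (\<Sum>j<m. cos ((2 * real j + 1) * (2 * \<theta>))) / (2 * real m)"
proof -
  have "(sin ((2 * real j + 1) * \<theta>))\<^sup>2 = 1 / 2 - cos ((2 * real j + 1) * (2 * \<theta>)) / 2" for j
    using cos_double_sin[of "(2 * real j + 1) * \<theta>"] by (simp add: algebra_simps)
  then have "P_avg L M m = (real m / 2 - (\<Sum>j<m. cos ((2 * real j + 1) * (2 * \<theta>))) / 2) / real m"
    by (simp add: P_avg_def grover_success_eq sum_subtractf sum_divide_distrib)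
  then show ?thesis
    using assms by (simp add: field_simps)
qed

lemma P_avg_closed_form:
  assumes "0 < m" and "\<theta> < pi / 2"
  shows "P_avg L M m = 1 / 2 - sin (4 * real m * \<theta>) / (4 * real m * sin (2 * \<theta>))"
proof -
  have "0 < sin (2 * \<theta>)"
    using angle_pos assms(2) by (intro sin_gt_zero) auto
  moreover have
    "sin (4 * real m * \<theta>) = 2 * sin (2 * \<theta>) * (\<Sum>j<m. cos ((2 * real j + 1) * (2 * \<theta>)))"
    using sin_times_sum_cos_odd[of "2 * \<theta>" m] by (simp add: mult.assoc)
  ultimately show ?thesis
    using assms(1) by (simp add: P_avg_eq_sum_cos field_simps)
qed

lemma P_avg_right_angle:
  assumes "0 < m" and "\<theta> = pi / 2"
  shows "P_avg L M m = 1"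
proof -
  have "cos ((2 * real j + 1) * (2 * \<theta>)) = -1" for j
    using cos_npi[of "2 * j + 1"] assms(2) by (simp add: algebra_simps)
  then show ?thesis
    using assms(1) by (simp add: P_avg_eq_sum_cos)
qed

end

theorem lemma14:
  fixes L M :: "'a set" and \<theta> :: real and m :: nat
  assumes "finite L" and "M \<subseteq> L"
    and "real (card L) / 4 < real (card M)"
    and "0 < \<theta>" and "\<theta> \<le> pi / 2"
    and "(sin \<theta>)\<^sup>2 = real (card M) / real (card L)"
    and "0 < m"
  shows "P_avg L M m \<ge>
           (if m = 1 then 1 / 4 else 1 / 2 - 1 / (2 * pi) * (1 / (1 - pi\<^sup>2 / 96)))"
proof -
  have "M \<noteq> {}"
    using assms(3) by auto
  then interpret grover_angle L M \<theta>
    using assms by unfold_locales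
  have quarter: "1 / 4 < (sin \<theta>)\<^sup>2"
    using assms(3) card_L_pos by (simp add: assms(6) field_simps)
  consider "m = 1" | "m \<noteq> 1" "\<theta> = pi / 2" | "2 \<le> m" "\<theta> < pi / 2"
    using assms(5,7) by linarith
  then show ?thesis
  proof cases
    case 1
    then show ?thesis
      using quarter by (simp add: P_avg_def grover_success_eq)
  next
    case 2
    then show ?thesis
      unfolding grover_avg_bound_def[symmetric]
      using P_avg_right_angle[OF assms(7)] grover_avg_bound_pos by simp
  next
    case 3
    have "pi / 6 < \<theta>"
      using assms(4) quarter by (intro pi_div_6_less_if_sin_sq_gt_quarter) auto
    with 3 show ?thesis
      unfolding grover_avg_bound_def[symmetric]
      using P_avg_closed_form[OF assms(7) 3(2)] sin_ratio_le_grover_avg_bound[of \<theta> m] by simp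
  qed
qed

end
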